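(* Let $X$ be a geodesic metric space and $f:X\to\mathbb R$. Then $f$ is glacially oscillating if and only if for each $\epsilon>0$ there is a bounded subset $K$ of $X$ such that for every connected component $C$ of $X\setminus K$ the diameter of $f(C)$ is at most $\epsilon$.
   Context: A glacial scale on a metric space $X$ is a sequence $\mathcal S=\{(K_i,n_i)\}_{i\ge1}$ of pairs, each $K_i$ a bounded subset of $X$ and $n_i$ a natural number, such that for every bounded $K\subset X$ and every $r>0$ there is $i$ with $K\subset K_i$ and $n_i>r$. An $\mathcal S$-chain is a finite sequence $x_1,\dots,x_n$ in $X$ such that for each $i\le n-1$ there is $m\ge1$ with $x_i,x_{i+1}\notin K_m$ and $d(x_i,x_{i+1})\le n_m$. A function $f:X\to\mathbb R$ is glacially oscillating if for every $\epsilon>0$ there is a glacial scale $\mathcal S$ such that $|f(x_1)-f(x_n)|<\epsilon$ for every $\mathcal S$-chain $x_1,\dots,x_n$. *)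

theory Defs
  imports "HOL-Analysis.Analysis"
begin

text \<open>The metric space X is the whole type 'a. Sequences are indexed from 0 instead of 1.\<close>

definition geodesic_space :: "'a::metric_space itself \<Rightarrow> bool" where
  "geodesic_space _ \<longleftrightarrow>
     (\<forall>x y::'a. \<exists>g::real \<Rightarrow> 'a. g 0 = x \<and> g (dist x y) = y \<and>
        (\<forall>s\<in>{0..dist x y}. \<forall>t\<in>{0..dist x y}. dist (g s) (g t) = \<bar>s - t\<bar>))"

definition glacial_scale :: "(nat \<Rightarrow> 'a::metric_space set \<times> nat) \<Rightarrow> bool" where
  "glacial_scale S \<longleftrightarrow>
     (\<forall>i. bounded (fst (S i))) \<and>
     (\<forall>K. bounded K \<longrightarrow> (\<forall>r::real. r > 0 \<longrightarrow>
        (\<exists>i. K \<subseteq> fst (S i) \<and> real (snd (S i)) > r)))"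

definition S_chain :: "(nat \<Rightarrow> 'a::metric_space set \<times> nat) \<Rightarrow> 'a list \<Rightarrow> bool" where
  "S_chain S xs \<longleftrightarrow> xs \<noteq> [] \<and>
     (\<forall>i. Suc i < length xs \<longrightarrow>
        (\<exists>m. xs ! i \<notin> fst (S m) \<and> xs ! Suc i \<notin> fst (S m) \<and>
             dist (xs ! i) (xs ! Suc i) \<le> real (snd (S m))))"

definition glacially_oscillating :: "('a::metric_space \<Rightarrow> real) \<Rightarrow> bool" where
  "glacially_oscillating f \<longleftrightarrow>
     (\<forall>\<epsilon>>0. \<exists>S. glacial_scale S \<and>
        (\<forall>xs. S_chain S xs \<longrightarrow> \<bar>f (hd xs) - f (last xs)\<bar> < \<epsilon>))"

end

theory Submission
  imports Defs
begin

text \<open>If f is glacially oscillating, pick a scale index i with n_i > 0: by connectedness,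
  any two points of a component of X - K_i are joined by a chain inside that component with
  steps at most n_i, which is an S-chain, so f varies by less than \<epsilon> on the component.
  Conversely, put K inside a ball B(p, R) and use the scale (B(p, R + i), i). A chain step from u
  to v with d(u, v) \<le> i and u, v outside B(p, R + i) stays in one component of X - K, because
  the geodesic from u to v keeps distance more than R from p. So both ends of every chain lie in
  one component of X - K, where f varies by at most \<epsilon>/2.\<close>

definition oscillation_on_components_le :: "('a::topological_space \<Rightarrow> real) \<Rightarrow> 'a set \<Rightarrow> real \<Rightarrow> bool"
  where "oscillation_on_components_le f K \<epsilon> \<longleftrightarrow>
    (\<forall>x\<in>- K. \<forall>y\<in>connected_component_set (- K) x. \<forall>z\<in>connected_component_set (- K) x.
       \<bar>f y - f z\<bar> \<le> \<epsilon>)"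

lemma oscillation_on_components_le_iff:
  "oscillation_on_components_le f K \<epsilon> \<longleftrightarrow>
    (\<forall>y z. connected_component (- K) y z \<longrightarrow> \<bar>f y - f z\<bar> \<le> \<epsilon>)"
  (is "?osc \<longleftrightarrow> ?pairs")
proof
  assume ?osc
  show ?pairs
  proof (intro allI impI)
    fix y z assume yz: "connected_component (- K) y z"
    then have "y \<in> - K" using connected_component_in by blast
    with \<open>?osc\<close> yz show "\<bar>f y - f z\<bar> \<le> \<epsilon>"
      unfolding oscillation_on_components_le_def by (simp add: connected_component_refl)
  qed
next
  assume ?pairs
  then show ?osc
    unfolding oscillation_on_components_le_def
    by (blast intro: connected_component_sym connected_component_trans)
qed

lemma connected_obtain_chain:
  fixes C :: "'a::metric_space set"
  assumes "connected C" "y \<in> C" "z \<in> C" "\<delta> > 0"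
  obtains xs where "xs \<noteq> []" "hd xs = y" "last xs = z" "set xs \<subseteq> C"
    "successively (\<lambda>u v. dist u v \<le> \<delta>) xs"
proof -
  define chain where "chain a b \<longleftrightarrow> (\<exists>xs. xs \<noteq> [] \<and> hd xs = a \<and> last xs = b \<and> set xs \<subseteq> C \<and>
    successively (\<lambda>u v. dist u v \<le> \<delta>) xs)" for a b
  have "chain y z"
  proof (rule connected_equivalence_relation[OF assms(1-3)])
    show "chain b a" if ab: "chain a b" for a b
    proof -
      obtain xs where "xs \<noteq> []" "hd xs = a" "last xs = b" "set xs \<subseteq> C"
        "successively (\<lambda>u v. dist u v \<le> \<delta>) xs"
        using ab unfolding chain_def by blast
      then show ?thesis
        unfolding chain_def by (intro exI[of _ "rev xs"]) (auto simp: hd_rev last_rev dist_commute)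
    qed
    show "chain a c" if ab: "chain a b" and bc: "chain b c" for a b c
    proof -
      obtain xs ys where "xs \<noteq> []" "hd xs = a" "last xs = b" "set xs \<subseteq> C"
        "successively (\<lambda>u v. dist u v \<le> \<delta>) xs"
        and "ys \<noteq> []" "hd ys = b" "last ys = c" "set ys \<subseteq> C"
        "successively (\<lambda>u v. dist u v \<le> \<delta>) ys"
        using ab bc unfolding chain_def by blast
      with \<open>\<delta> > 0\<close> show ?thesis
        unfolding chain_def by (intro exI[of _ "xs @ ys"]) (auto simp: successively_append_iff)
    qed
    show "\<exists>T. openin (top_of_set C) T \<and> a \<in> T \<and> (\<forall>x\<in>T. chain a x)" if "a \<in> C" for a
    proof (intro exI conjI ballI)
      show "openin (top_of_set C) (C \<inter> ball a \<delta>)" by (simp add: openin_open_Int)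
      show "a \<in> C \<inter> ball a \<delta>" using that \<open>\<delta> > 0\<close> by simp
      show "chain a x" if "x \<in> C \<inter> ball a \<delta>" for x
        using that \<open>a \<in> C\<close> unfolding chain_def by (intro exI[of _ "[a, x]"]) auto
    qed
  qed
  then show thesis using that unfolding chain_def by blast
qed

lemma successively_connected_component_hd_last:
  assumes "successively (connected_component A) xs" "xs \<noteq> []"
  shows "hd xs = last xs \<or> connected_component A (hd xs) (last xs)"
  using assms
proof (induction xs rule: induct_list012)
  case (3 x y zs)
  then show ?case by (auto intro: connected_component_trans)
qed auto

lemma geodesic_space_obtain_segment:
  fixes x y :: "'a::metric_space"
  assumes "geodesic_space TYPE('a)"
  obtains G where "connected G" "x \<in> G" "y \<in> G" "\<And>w. w \<in> G \<Longrightarrow> dist x w + dist w y = dist x y"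
proof -
  define d where "d = dist x y"
  obtain g :: "real \<Rightarrow> 'a" where g: "g 0 = x" "g d = y"
    and isometric: "\<forall>s\<in>{0..d}. \<forall>t\<in>{0..d}. dist (g s) (g t) = \<bar>s - t\<bar>"
    using assms unfolding geodesic_space_def d_def by blast
  have "d \<ge> 0" unfolding d_def by simp
  have "1-lipschitz_on {0..d} g"
    using isometric by (intro lipschitz_onI) (auto simp: dist_real_def)
  then have "connected (g ` {0..d})"
    by (intro connected_continuous_image lipschitz_on_continuous_on connected_Icc)
  moreover have "dist x w + dist w y = d" if w: "w \<in> g ` {0..d}" for w
  proof -
    obtain t where t: "t \<in> {0..d}" "w = g t" using w by blast
    have "dist (g 0) (g t) = \<bar>0 - t\<bar>" "dist (g t) (g d) = \<bar>t - d\<bar>"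
      using isometric t \<open>d \<ge> 0\<close> by auto
    then have "dist x w = t" "dist w y = d - t" using t g by auto
    then show ?thesis by simp
  qed
  moreover have "x \<in> g ` {0..d}" "y \<in> g ` {0..d}"
    using g \<open>d \<ge> 0\<close> by (auto intro: rev_image_eqI)
  ultimately show thesis using that unfolding d_def by blast
qed

lemma geodesic_space_connected_component_far:
  fixes p u v :: "'a::metric_space"
  assumes "geodesic_space TYPE('a)" "K \<subseteq> cball p R"
    and "dist u v \<le> m" "dist p u > R + m" "dist p v > R + m"
  shows "connected_component (- K) u v"
proof -
  obtain G where G: "connected G" "u \<in> G" "v \<in> G"
    and between: "\<And>w. w \<in> G \<Longrightarrow> dist u w + dist w v = dist u v"
    using geodesic_space_obtain_segment[OF assms(1), of u v] by blast
  have "dist p w > R" if "w \<in> G" for w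
    using between[OF that] dist_triangle2[of p u w] dist_triangle2[of p v w] dist_commute[of w v]
      zero_le_dist[of u v] assms(3-5)
    by linarith
  then have "G \<subseteq> - K" using assms(2) by force
  then show ?thesis using G by (intro connected_componentI)
qed

lemma glacial_scale_obtain_pos:
  assumes "glacial_scale S"
  obtains i where "snd (S i) > 0"
  using assms unfolding glacial_scale_def
  by (metis of_nat_0_less_iff order.strict_trans zero_less_one)

lemma S_chain_outside:
  assumes "xs \<noteq> []" "set xs \<inter> fst (S m) = {}"
    and "successively (\<lambda>u v. dist u v \<le> real (snd (S m))) xs"
  shows "S_chain S xs"
  unfolding S_chain_def
proof (intro conjI allI impI)
  fix j assume j: "Suc j < length xs"
  then have "xs ! j \<in> set xs" "xs ! Suc j \<in> set xs" by simp_all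
  with assms(2) successively_nth[OF assms(3) j]
  show "\<exists>m. xs ! j \<notin> fst (S m) \<and> xs ! Suc j \<notin> fst (S m) \<and>
      dist (xs ! j) (xs ! Suc j) \<le> real (snd (S m))"
    by blast
qed (rule assms(1))

definition cball_scale :: "'a::metric_space \<Rightarrow> real \<Rightarrow> nat \<Rightarrow> 'a set \<times> nat"
  where "cball_scale p R i = (cball p (R + real i), i)"

lemma glacial_scale_cball_scale: "glacial_scale (cball_scale p R)"
  unfolding glacial_scale_def cball_scale_def fst_conv snd_conv
proof (intro conjI allI impI)
  fix K :: "'a set" and r :: real
  assume "bounded K"
  then obtain B where "K \<subseteq> cball p B"
    using bounded_any_center[of K p] unfolding subset_eq mem_cball by blast
  define i where "i = nat \<lceil>max (B - R) r\<rceil> + 1"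
  have "real i > max (B - R) r" unfolding i_def by linarith
  then have "K \<subseteq> cball p (R + real i) \<and> r < real i"
    using \<open>K \<subseteq> cball p B\<close> by (auto simp: subset_iff)
  then show "\<exists>i. K \<subseteq> cball p (R + real i) \<and> r < real i" by blast
qed simp

lemma S_chain_cball_scale_successively:
  assumes "geodesic_space TYPE('a::metric_space)" "K \<subseteq> cball (p::'a) R"
    and "S_chain (cball_scale p R) xs"
  shows "successively (connected_component (- K)) xs"
  unfolding successively_conv_nth
proof (intro allI impI)
  fix j assume "Suc j < length xs"
  then have "\<exists>m::nat. dist p (xs ! j) > R + m \<and> dist p (xs ! Suc j) > R + m \<and>
      dist (xs ! j) (xs ! Suc j) \<le> m"
    using assms(3) unfolding S_chain_def cball_scale_def by (auto simp: not_le)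
  then obtain m :: nat where "dist p (xs ! j) > R + m" "dist p (xs ! Suc j) > R + m"
    "dist (xs ! j) (xs ! Suc j) \<le> m"
    by blast
  then show "connected_component (- K) (xs ! j) (xs ! Suc j)"
    using geodesic_space_connected_component_far[OF assms(1,2)] by blast
qed

lemma glacially_oscillating_imp_oscillation_on_components_le:
  fixes f :: "'a::metric_space \<Rightarrow> real"
  assumes "glacially_oscillating f" "\<epsilon> > 0"
  obtains K where "bounded K" "oscillation_on_components_le f K \<epsilon>"
proof -
  obtain S where S: "glacial_scale S" and small: "\<And>xs. S_chain S xs \<Longrightarrow> \<bar>f (hd xs) - f (last xs)\<bar> < \<epsilon>"
    using assms unfolding glacially_oscillating_def by blast
  obtain i where "snd (S i) > 0" using glacial_scale_obtain_pos[OF S] .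
  have "\<bar>f y - f z\<bar> \<le> \<epsilon>" if yz: "connected_component (- fst (S i)) y z" for y z
  proof -
    obtain xs where "xs \<noteq> []" "hd xs = y" "last xs = z"
      "set xs \<subseteq> connected_component_set (- fst (S i)) y"
      "successively (\<lambda>u v. dist u v \<le> real (snd (S i))) xs"
      using connected_obtain_chain[of "connected_component_set (- fst (S i)) y" y z "real (snd (S i))"]
        yz \<open>snd (S i) > 0\<close> connected_component_in[OF yz]
      by auto
    moreover have "set xs \<inter> fst (S i) = {}"
      using \<open>set xs \<subseteq> _\<close> connected_component_subset[of "- fst (S i)" y] by blast
    ultimately have "S_chain S xs" by (intro S_chain_outside)
    then show ?thesis using small \<open>hd xs = y\<close> \<open>last xs = z\<close> by fastforce
  qed
  moreover have "bounded (fst (S i))" using S unfolding glacial_scale_def by blast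
  ultimately show thesis
    using that[of "fst (S i)"] unfolding oscillation_on_components_le_iff by blast
qed

lemma oscillation_on_components_le_imp_glacially_oscillating:
  fixes f :: "'a::metric_space \<Rightarrow> real"
  assumes "geodesic_space TYPE('a)"
    and small: "\<And>\<epsilon>. \<epsilon> > 0 \<Longrightarrow> \<exists>K. bounded K \<and> oscillation_on_components_le f K \<epsilon>"
  shows "glacially_oscillating f"
  unfolding glacially_oscillating_def
proof (intro allI impI)
  fix \<epsilon> :: real assume "\<epsilon> > 0"
  then obtain K where "bounded K" and K: "oscillation_on_components_le f K (\<epsilon> / 2)"
    using small[of "\<epsilon> / 2"] by auto
  then obtain p :: 'a and R where "K \<subseteq> cball p R" using bounded_subset_cball by blast
  have "\<bar>f (hd xs) - f (last xs)\<bar> < \<epsilon>" if xs: "S_chain (cball_scale p R) xs" for xs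
  proof -
    have "hd xs = last xs \<or> connected_component (- K) (hd xs) (last xs)"
      using successively_connected_component_hd_last
        S_chain_cball_scale_successively[OF assms(1) \<open>K \<subseteq> _\<close> xs] xs
      unfolding S_chain_def by blast
    then have "\<bar>f (hd xs) - f (last xs)\<bar> \<le> \<epsilon> / 2"
      using K \<open>\<epsilon> > 0\<close> unfolding oscillation_on_components_le_iff by auto
    then show ?thesis using \<open>\<epsilon> > 0\<close> by linarith
  qed
  then show "\<exists>S. glacial_scale S \<and> (\<forall>xs. S_chain S xs \<longrightarrow> \<bar>f (hd xs) - f (last xs)\<bar> < \<epsilon>)"
    using glacial_scale_cball_scale by blast
qed

lemma glacially_oscillating_iff_oscillation_on_components_le:
  fixes f :: "'a::metric_space \<Rightarrow> real"
  assumes "geodesic_space TYPE('a)"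
  shows "glacially_oscillating f \<longleftrightarrow>
    (\<forall>\<epsilon>>0. \<exists>K. bounded K \<and> oscillation_on_components_le f K \<epsilon>)"
proof
  show "\<forall>\<epsilon>>0. \<exists>K. bounded K \<and> oscillation_on_components_le f K \<epsilon>"
    if "glacially_oscillating f"
    using glacially_oscillating_imp_oscillation_on_components_le[OF that] by blast
  show "glacially_oscillating f"
    if "\<forall>\<epsilon>>0. \<exists>K. bounded K \<and> oscillation_on_components_le f K \<epsilon>"
    using that by (intro oscillation_on_components_le_imp_glacially_oscillating[OF assms]) blast
qed

theorem proposition3p14:
  fixes f :: "'a::metric_space \<Rightarrow> real"
  assumes "geodesic_space TYPE('a)"
  shows "glacially_oscillating f \<longleftrightarrow>
    (\<forall>\<epsilon>>0. \<exists>K. bounded K \<and>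
       (\<forall>x\<in>- K. \<forall>y\<in>connected_component_set (- K) x. \<forall>z\<in>connected_component_set (- K) x.
           \<bar>f y - f z\<bar> \<le> \<epsilon>))"
  using glacially_oscillating_iff_oscillation_on_components_le[OF assms, of f]
  unfolding oscillation_on_components_le_def .

end
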